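(* Let $S=\{\rho_1=0<\rho_2<\cdots\}$ be an Arf numerical semigroup. Then for every positive integer $i$, $\beta(2\rho_i)=i$ and consequently $\#A[2\rho_i]=2i-1$.
   Context: A numerical semigroup is a submonoid $S$ of $(\mathbb{N}_0,+)$ with finite complement, with elements listed increasingly $\rho_1=0<\rho_2<\cdots$. $S$ is Arf if $\rho_i+\rho_j-\rho_k\in S$ for all positive integers $i\ge j\ge k$. For $\rho\in S$, $A[\rho]=\{p\in S:\ \rho-p\in S\}$ and $\beta(\rho)=\max\{j\ge1:\ \rho_1,\dots,\rho_j\in A[\rho]\ \text{and}\ 2\rho_j\le\rho\}$. *)

theory Defs
  imports Main "HOL-Library.Infinite_Set"
begin

definition numerical_semigroup :: "nat set \<Rightarrow> bool" where
  "numerical_semigroup S \<longleftrightarrow> 0 \<in> S \<and> (\<forall>a\<in>S. \<forall>b\<in>S. a + b \<in> S) \<and> finite (UNIV - S)"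

text \<open>rho S i is the i-th element of S in increasing order (i \<ge> 1), so rho S 1 = 0.\<close>
definition rho :: "nat set \<Rightarrow> nat \<Rightarrow> nat" where
  "rho S i = Infinite_Set.enumerate S (i - 1)"

definition arf :: "nat set \<Rightarrow> bool" where
  "arf S \<longleftrightarrow> (\<forall>i j k. 1 \<le> k \<and> k \<le> j \<and> j \<le> i \<longrightarrow> rho S i + rho S j - rho S k \<in> S)"

definition Aset :: "nat set \<Rightarrow> nat \<Rightarrow> nat set" where
  "Aset S r = {p \<in> S. p \<le> r \<and> r - p \<in> S}"

definition beta :: "nat set \<Rightarrow> nat \<Rightarrow> nat" where
  "beta S r = Max {j. 1 \<le> j \<and> (\<forall>l\<in>{1..j}. rho S l \<in> Aset S r) \<and> 2 * rho S j \<le> r}"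

end

theory Submission
  imports Defs
begin

text \<open>Taking \<open>j = i\<close> in the Arf condition gives \<open>2\<rho>\<^sub>i - \<rho>\<^sub>l \<in> S\<close> for all \<open>l \<le> i\<close>, so all \<open>i\<close>
  elements \<open>\<rho>\<^sub>1, \<dots>, \<rho>\<^sub>i\<close> of \<open>S\<close> up to \<open>\<rho>\<^sub>i\<close> lie in \<open>A[2\<rho>\<^sub>i]\<close>. These form the lower half
  of \<open>A[2\<rho>\<^sub>i]\<close>, which gives \<open>\<beta>(2\<rho>\<^sub>i) = i\<close>; the reflection \<open>p \<mapsto> 2\<rho>\<^sub>i - p\<close> maps the lower
  half onto the upper half, and the two halves share only \<open>\<rho>\<^sub>i\<close>, so \<open>#A[2\<rho>\<^sub>i] = 2i - 1\<close>.\<close>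

lemma numerical_semigroup_infinite: "numerical_semigroup S \<Longrightarrow> infinite S"
  unfolding numerical_semigroup_def
  by (metis Diff_infinite_finite finite_Diff2 infinite_UNIV_nat)

lemma rho_in: "infinite S \<Longrightarrow> rho S l \<in> S"
  unfolding rho_def by (simp add: enumerate_in_set)

lemma rho_less_rho: "infinite S \<Longrightarrow> 1 \<le> a \<Longrightarrow> a < b \<Longrightarrow> rho S a < rho S b"
  unfolding rho_def by (metis diff_less_mono strict_mono_enumerate strict_mono_less)

lemma rho_le_rho_iff:
  "infinite S \<Longrightarrow> 1 \<le> a \<Longrightarrow> 1 \<le> b \<Longrightarrow> rho S a \<le> rho S b \<longleftrightarrow> a \<le> b"
  using rho_less_rho[of S a b] rho_less_rho[of S b a] by (cases a b rule: linorder_cases) auto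

lemma inj_on_rho: "infinite S \<Longrightarrow> inj_on (rho S) {1..}"
  by (rule inj_onI) (auto simp: eq_iff rho_le_rho_iff)

lemma rho_surj: "infinite S \<Longrightarrow> s \<in> S \<Longrightarrow> \<exists>n\<ge>1. rho S n = s"
  unfolding rho_def by (metis enumerate_Ex add_diff_cancel_right' le_add2)

lemma rho_image_atLeastAtMost:
  assumes "infinite S" "1 \<le> i"
  shows "rho S ` {1..i} = {p \<in> S. p \<le> rho S i}"
proof
  show "rho S ` {1..i} \<subseteq> {p \<in> S. p \<le> rho S i}"
    using assms by (auto simp: rho_in rho_le_rho_iff)
  show "{p \<in> S. p \<le> rho S i} \<subseteq> rho S ` {1..i}"
  proof
    fix p assume p: "p \<in> {p \<in> S. p \<le> rho S i}"
    then obtain n where "n \<ge> 1" "rho S n = p" using rho_surj[OF assms(1)] by blast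
    with p assms show "p \<in> rho S ` {1..i}" by (auto simp: rho_le_rho_iff)
  qed
qed

lemma card_le_rho: "infinite S \<Longrightarrow> 1 \<le> i \<Longrightarrow> card {p \<in> S. p \<le> rho S i} = i"
  using card_image[OF inj_on_subset[OF inj_on_rho, of S "{1..i}"]]
  by (auto simp: rho_image_atLeastAtMost[symmetric])

lemma finite_Aset: "finite (Aset S r)"
  unfolding Aset_def by (rule finite_subset[of _ "{..r}"]) auto

lemma Aset_reflect: "p \<in> Aset S r \<Longrightarrow> r - p \<in> Aset S r"
  unfolding Aset_def by auto

lemma card_Aset:
  "card (Aset S r) + card {p \<in> Aset S r. 2 * p = r} = 2 * card {p \<in> Aset S r. 2 * p \<le> r}"
proof -
  define L where "L = {p \<in> Aset S r. 2 * p \<le> r}"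
  define U where "U = {p \<in> Aset S r. r \<le> 2 * p}"
  have "U = (\<lambda>p. r - p) ` L"
  proof
    show "U \<subseteq> (\<lambda>p. r - p) ` L"
    proof
      fix p assume "p \<in> U"
      then have "r - p \<in> L" "p = r - (r - p)"
        by (auto simp: U_def L_def Aset_reflect) (auto simp: Aset_def)
      then show "p \<in> (\<lambda>p. r - p) ` L" by blast
    qed
    show "(\<lambda>p. r - p) ` L \<subseteq> U"
      by (auto simp: U_def L_def Aset_reflect)
  qed
  moreover have "inj_on (\<lambda>p. r - p) L"
    by (rule inj_onI) (auto simp: L_def Aset_def)
  ultimately have "card U = card L" by (simp add: card_image)
  moreover have "L \<union> U = Aset S r" "L \<inter> U = {p \<in> Aset S r. 2 * p = r}"
    by (auto simp: L_def U_def)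
  moreover have "finite L" "finite U"
    using finite_Aset by (auto simp: L_def U_def)
  ultimately show ?thesis
    using card_Un_Int[of L U] by (simp add: L_def)
qed

lemma beta_eqI:
  assumes "infinite S" "1 \<le> i"
    and "\<forall>l\<in>{1..i}. rho S l \<in> Aset S r" "2 * rho S i \<le> r" "r < 2 * rho S (Suc i)"
  shows "beta S r = i"
  unfolding beta_def
proof (rule Max_eqI)
  let ?J = "{j. 1 \<le> j \<and> (\<forall>l\<in>{1..j}. rho S l \<in> Aset S r) \<and> 2 * rho S j \<le> r}"
  have "j \<le> i" if "j \<in> ?J" for j
  proof (rule ccontr)
    assume "\<not> j \<le> i"
    then have "rho S (Suc i) \<le> rho S j"
      using assms(1,2) by (simp add: rho_le_rho_iff)
    with that assms(5) show False by simp
  qed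
  then show "finite ?J" "\<And>j. j \<in> ?J \<Longrightarrow> j \<le> i"
    by (auto intro: finite_subset[of _ "{..i}"])
  show "i \<in> ?J" using assms(2-4) by blast
qed

lemma arf_rho_in_Aset_double:
  assumes "arf S" "infinite S" "1 \<le> l" "l \<le> i"
  shows "rho S l \<in> Aset S (2 * rho S i)"
proof -
  have "rho S i + rho S i - rho S l \<in> S"
    using assms(1,3,4) unfolding arf_def by blast
  moreover have "rho S l \<le> rho S i"
    using assms(2-4) by (simp add: rho_le_rho_iff)
  ultimately show ?thesis
    using rho_in[OF assms(2)] by (simp add: Aset_def mult_2)
qed

lemma arf_lower_Aset_double:
  assumes "arf S" "infinite S" "1 \<le> i"
  shows "{p \<in> Aset S (2 * rho S i). 2 * p \<le> 2 * rho S i} = {p \<in> S. p \<le> rho S i}"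
proof
  show "{p \<in> Aset S (2 * rho S i). 2 * p \<le> 2 * rho S i} \<subseteq> {p \<in> S. p \<le> rho S i}"
    by (auto simp: Aset_def)
  have "{p \<in> S. p \<le> rho S i} \<subseteq> Aset S (2 * rho S i)"
    unfolding rho_image_atLeastAtMost[OF assms(2,3), symmetric]
    using arf_rho_in_Aset_double[OF assms(1,2)] by auto
  then show "{p \<in> S. p \<le> rho S i} \<subseteq> {p \<in> Aset S (2 * rho S i). 2 * p \<le> 2 * rho S i}"
    by auto
qed

theorem mainTheorem5:
  fixes S :: "nat set" and i :: nat
  assumes "numerical_semigroup S" and "arf S" and "1 \<le> i"
  shows "beta S (2 * rho S i) = i \<and> card (Aset S (2 * rho S i)) = 2 * i - 1"
proof
  have inf: "infinite S"
    using assms(1) by (rule numerical_semigroup_infinite)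
  show "beta S (2 * rho S i) = i"
    using assms(2,3) inf arf_rho_in_Aset_double rho_less_rho[of S i "Suc i"]
    by (intro beta_eqI) auto
  have "{p \<in> Aset S (2 * rho S i). 2 * p = 2 * rho S i} = {rho S i}"
    using arf_rho_in_Aset_double[OF assms(2) inf assms(3) order_refl] by auto
  then have "card (Aset S (2 * rho S i)) + 1 = 2 * i"
    using card_Aset[of S "2 * rho S i"]
    unfolding arf_lower_Aset_double[OF assms(2) inf assms(3)] card_le_rho[OF inf assms(3)]
    by simp
  then show "card (Aset S (2 * rho S i)) = 2 * i - 1"
    by simp
qed

end
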